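(* Let $1<p<\infty$, let $V\in L^\infty_{\mathrm{loc}}(\mathbb{R}^n)$ with $V\ge1$ a.e., and let $f\in L^1(\mathbb{R}^n)$. Let $u$ be a localized asymptotic solution of $-\operatorname{div}(|\nabla u|^{p-2}\nabla u)+V|u|^{p-2}u=f$ in $\mathbb{R}^n$ such that $u\in W^{1,p}_{\mathrm{loc}}(\mathbb{R}^n)\cap L^\infty_{\mathrm{loc}}(\mathbb{R}^n)$. Then for all $\psi\in C_c^\infty(\mathbb{R}^n)$, \[ \int_{\mathbb{R}^n}|\nabla u|^{p-2}\nabla u\cdot\nabla\psi\,dx+\int_{\mathbb{R}^n}V|u|^{p-2}u\,\psi\,dx=\int_{\mathbb{R}^n}f\psi\,dx. \]
   Context: $\Lambda^p(\mathbb{R}^n)$: measurable $u$ with $\int\min(|u|,1)^p\,dx<\infty$. $T_t(s)=\max\{-t,\min\{s,t\}\}$. $\mathrm{X}=\{v\in W^{1,p}(\mathbb{R}^n):\int V|v|^p\,dx<\infty\}$. For $\alpha,t>0$ and measurable $v,\phi$, $\mathcal H_{\alpha,t}(v,\phi)=T_t(T_\alpha(v)-\phi)-T_t(T_\alpha(v))$. A function $u\in\Lambda^p(\mathbb{R}^n)$ is a localized asymptotic solution if (i) $T_\alpha(u)\in\mathrm{X}$ for all $\alpha>0$, and (ii) for every $t>0$, every compactly supported $\phi\in W^{1,p}(\mathbb{R}^n)\cap L^\infty(\mathbb{R}^n)$ and every $\alpha>t+\|\phi\|_\infty$, \[\int|\nabla T_\alpha(u)|^{p-2}\nabla T_\alpha(u)\cdot\nabla\mathcal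 H_{\alpha,t}(u,\phi)\,dx+\int V|T_\alpha(u)|^{p-2}T_\alpha(u)\mathcal H_{\alpha,t}(u,\phi)\,dx=\int f\,\mathcal H_{\alpha,t}(u,\phi)\,dx.\] *)

theory Defs
  imports "HOL-Analysis.Analysis" "HOL-Probability.Essential_Supremum"
begin

(* Euclidean space R^n is modelled by an arbitrary type 'a :: euclidean_space
   (n = DIM('a)), with Lebesgue measure "lebesgue". *)

(* C^infinity: differentiable everywhere, and every partial derivative is again C^infinity
   (greatest fixed point, hence all partial derivatives of all orders exist). *)
coinductive smooth :: "('a::euclidean_space \<Rightarrow> real) \<Rightarrow> bool" where
  "(\<forall>x. f differentiable (at x)) \<Longrightarrow>
   (\<forall>b\<in>Basis. smooth (\<lambda>x. frechet_derivative f (at x) b)) \<Longrightarrow> smooth f"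

definition compact_support :: "('a::euclidean_space \<Rightarrow> real) \<Rightarrow> bool" where
  "compact_support \<phi> \<longleftrightarrow> (\<exists>K. compact K \<and> (\<forall>x. x \<notin> K \<longrightarrow> \<phi> x = 0))"

definition test_function :: "('a::euclidean_space \<Rightarrow> real) \<Rightarrow> bool" where
  "test_function \<phi> \<longleftrightarrow> smooth \<phi> \<and> compact_support \<phi>"

definition cgrad :: "('a::euclidean_space \<Rightarrow> real) \<Rightarrow> 'a \<Rightarrow> 'a" where
  "cgrad \<phi> x = (\<Sum>b\<in>Basis. frechet_derivative \<phi> (at x) b *\<^sub>R b)"

definition locally_integrable :: "('a::euclidean_space \<Rightarrow> real) \<Rightarrow> bool" where
  "locally_integrable u \<longleftrightarrow> (\<forall>K. compact K \<longrightarrow> set_integrable lebesgue K u)"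

definition weak_gradient :: "('a::euclidean_space \<Rightarrow> real) \<Rightarrow> ('a \<Rightarrow> 'a) \<Rightarrow> bool" where
  "weak_gradient u g \<longleftrightarrow> locally_integrable u \<and>
     (\<forall>b\<in>Basis. locally_integrable (\<lambda>x. g x \<bullet> b)) \<and>
     (\<forall>\<phi>. test_function \<phi> \<longrightarrow> (\<forall>b\<in>Basis.
        (\<integral>x. u x * frechet_derivative \<phi> (at x) b \<partial>lebesgue)
          = - (\<integral>x. (g x \<bullet> b) * \<phi> x \<partial>lebesgue)))"

(* the (a.e. unique) weak gradient *)
definition wgrad :: "('a::euclidean_space \<Rightarrow> real) \<Rightarrow> 'a \<Rightarrow> 'a" where
  "wgrad u = (SOME g. weak_gradient u g)"

definition Lp :: "real \<Rightarrow> ('a::euclidean_space \<Rightarrow> real) \<Rightarrow> bool" where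
  "Lp p u \<longleftrightarrow> u \<in> borel_measurable lebesgue \<and> integrable lebesgue (\<lambda>x. \<bar>u x\<bar> powr p)"

definition Lp_loc :: "real \<Rightarrow> ('a::euclidean_space \<Rightarrow> real) \<Rightarrow> bool" where
  "Lp_loc p u \<longleftrightarrow> u \<in> borel_measurable lebesgue \<and>
     (\<forall>K. compact K \<longrightarrow> set_integrable lebesgue K (\<lambda>x. \<bar>u x\<bar> powr p))"

definition Linf :: "('a::euclidean_space \<Rightarrow> real) \<Rightarrow> bool" where
  "Linf u \<longleftrightarrow> u \<in> borel_measurable lebesgue \<and> esssup lebesgue (\<lambda>x. ereal \<bar>u x\<bar>) < \<infinity>"

definition Linf_loc :: "('a::euclidean_space \<Rightarrow> real) \<Rightarrow> bool" where
  "Linf_loc u \<longleftrightarrow> u \<in> borel_measurable lebesgue \<and>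
     (\<forall>K. compact K \<longrightarrow> (\<exists>C. AE x in lebesgue. x \<in> K \<longrightarrow> \<bar>u x\<bar> \<le> C))"

definition W1p :: "real \<Rightarrow> ('a::euclidean_space \<Rightarrow> real) \<Rightarrow> bool" where
  "W1p p u \<longleftrightarrow> Lp p u \<and> (\<exists>g. weak_gradient u g \<and> Lp p (\<lambda>x. norm (g x)))"

definition W1p_loc :: "real \<Rightarrow> ('a::euclidean_space \<Rightarrow> real) \<Rightarrow> bool" where
  "W1p_loc p u \<longleftrightarrow> Lp_loc p u \<and> (\<exists>g. weak_gradient u g \<and> Lp_loc p (\<lambda>x. norm (g x)))"

definition Lambda_p :: "real \<Rightarrow> ('a::euclidean_space \<Rightarrow> real) \<Rightarrow> bool" where
  "Lambda_p p u \<longleftrightarrow> u \<in> borel_measurable lebesgue \<and>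
     integrable lebesgue (\<lambda>x. (min \<bar>u x\<bar> 1) powr p)"

definition trunc :: "real \<Rightarrow> real \<Rightarrow> real" where
  "trunc t s = max (- t) (min s t)"

definition Xsp :: "real \<Rightarrow> ('a::euclidean_space \<Rightarrow> real) \<Rightarrow> ('a \<Rightarrow> real) \<Rightarrow> bool" where
  "Xsp p V v \<longleftrightarrow> W1p p v \<and> integrable lebesgue (\<lambda>x. V x * \<bar>v x\<bar> powr p)"

definition Hfun :: "real \<Rightarrow> real \<Rightarrow> ('a \<Rightarrow> real) \<Rightarrow> ('a \<Rightarrow> real) \<Rightarrow> 'a \<Rightarrow> real" where
  "Hfun \<alpha> t v \<phi> x = trunc t (trunc \<alpha> (v x) - \<phi> x) - trunc t (trunc \<alpha> (v x))"

(* localized asymptotic solution of -div(|\<nabla>u|^{p-2}\<nabla>u) + V|u|^{p-2}u = f.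
   Convention: |a|^{p-2}a is 0 at a = 0 (0 powr _ = 0 in Isabelle). *)
definition localized_asymptotic_solution ::
  "real \<Rightarrow> ('a::euclidean_space \<Rightarrow> real) \<Rightarrow> ('a \<Rightarrow> real) \<Rightarrow> ('a \<Rightarrow> real) \<Rightarrow> bool" where
  "localized_asymptotic_solution p V f u \<longleftrightarrow> Lambda_p p u \<and>
     (\<forall>\<alpha>>0. Xsp p V (\<lambda>x. trunc \<alpha> (u x))) \<and>
     (\<forall>t>0. \<forall>\<phi> \<alpha>. W1p p \<phi> \<and> Linf \<phi> \<and> compact_support \<phi> \<and>
        ereal \<alpha> > ereal t + esssup lebesgue (\<lambda>x. ereal \<bar>\<phi> x\<bar>) \<longrightarrow>
        (let Tu = (\<lambda>x. trunc \<alpha> (u x)); H = Hfun \<alpha> t u \<phi> in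
          (\<integral>x. norm (wgrad Tu x) powr (p - 2) * (wgrad Tu x \<bullet> wgrad H x) \<partial>lebesgue)
          + (\<integral>x. V x * \<bar>Tu x\<bar> powr (p - 2) * Tu x * H x \<partial>lebesgue)
          = (\<integral>x. f x * H x \<partial>lebesgue)))"

end

theory Submission
  imports Defs "HOL-Computational_Algebra.Polynomial"
begin

(* Because u is locally bounded, |u| <= M a.e. on a box containing the support of psi.  Choosing
   t > M + sup |psi| and alpha > t + sup |psi|, neither truncation acts there: T_alpha(u) = u on
   the box and H_{alpha,t}(u, psi) = -psi a.e.  The defining identity of a localized asymptotic
   solution with phi = psi then turns into the claimed one, provided weak gradients of a.e. equal
   functions agree a.e.  That follows from the fundamental lemma of the calculus of variations,
   proved here with explicit C^infinity bumps built from exp(-1/x) that converge to indicators of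
   cubes, together with Lebesgue's differentiation theorem. *)

section \<open>Smooth functions of one real variable\<close>

coinductive smooth_real :: "(real \<Rightarrow> real) \<Rightarrow> bool" where
  "(\<forall>x. h differentiable (at x)) \<Longrightarrow> smooth_real (deriv h) \<Longrightarrow> smooth_real h"

lemma smooth_real_deriv: "smooth_real h \<Longrightarrow> smooth_real (deriv h)"
  by (erule smooth_real.cases) auto

lemma smooth_real_DERIV: "smooth_real h \<Longrightarrow> (h has_real_derivative deriv h x) (at x)"
  by (erule smooth_real.cases) (auto simp: DERIV_deriv_iff_real_differentiable)

lemma DERIV_sum_list_products:
  assumes "\<And>F G. (F, G) \<in> set ps \<Longrightarrow> (F has_real_derivative F' F x) (at x) \<and> (G has_real_derivative G' G x) (at x)"
  shows "((\<lambda>x. \<Sum>(F, G)\<leftarrow>ps. F x * G x) has_real_derivative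
           (\<Sum>(F, G)\<leftarrow>ps. F' F x * G x + F x * G' G x)) (at x)"
  using assms by (induction ps) (auto intro!: derivative_eq_intros)

text \<open>Derivatives of products are sums of products, so closure under multiplication is proved
  coinductively for finite sums of products, written as sums over lists of factor pairs.\<close>

lemma smooth_real_sum_list_products:
  "\<forall>(F, G)\<in>set ps. smooth_real F \<and> smooth_real G \<Longrightarrow> smooth_real (\<lambda>x. \<Sum>(F, G)\<leftarrow>ps. F x * G x)"
proof (coinduction arbitrary: ps rule: smooth_real.coinduct)
  case (smooth_real ps)
  let ?ps' = "map (\<lambda>(F, G). (deriv F, G)) ps @ map (\<lambda>(F, G). (F, deriv G)) ps"
  have D: "((\<lambda>x. \<Sum>(F, G)\<leftarrow>ps. F x * G x) has_real_derivative (\<Sum>(F, G)\<leftarrow>?ps'. F x * G x)) (at x)" for x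
    using DERIV_sum_list_products[of ps "\<lambda>F. deriv F" x "\<lambda>G. deriv G"] smooth_real
    by (fastforce simp: case_prod_unfold sum_list_addf o_def intro: smooth_real_DERIV)
  then have "deriv (\<lambda>x. \<Sum>(F, G)\<leftarrow>ps. F x * G x) = (\<lambda>x. \<Sum>(F, G)\<leftarrow>?ps'. F x * G x)"
    using DERIV_imp_deriv by blast
  moreover have "\<forall>(F, G)\<in>set ?ps'. smooth_real F \<and> smooth_real G"
    using smooth_real by (auto intro: smooth_real_deriv)
  ultimately show ?case
    using D real_differentiable_def by blast
qed

lemma smooth_real_mult: "smooth_real f \<Longrightarrow> smooth_real g \<Longrightarrow> smooth_real (\<lambda>x. f x * g x)"
  using smooth_real_sum_list_products[of "[(f, g)]"] by simp

lemma smooth_real_affine: "smooth_real h \<Longrightarrow> smooth_real (\<lambda>x. k * h (m * x + c))"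
proof (coinduction arbitrary: h k rule: smooth_real.coinduct)
  case (smooth_real h k)
  have D: "((\<lambda>x. k * h (m * x + c)) has_real_derivative k * (deriv h (m * x + c) * m)) (at x)" for x
    by (intro DERIV_cmult DERIV_chain2[OF smooth_real_DERIV[OF smooth_real]])
      (auto intro!: derivative_eq_intros)
  then have "deriv (\<lambda>x. k * h (m * x + c)) = (\<lambda>x. (k * m) * deriv h (m * x + c))"
    using DERIV_imp_deriv by (fastforce simp: ac_simps)
  then show ?case
    using D smooth_real_deriv[OF smooth_real] real_differentiable_def by blast
qed

definition exp_recip_poly :: "real poly \<Rightarrow> real \<Rightarrow> real" where
  "exp_recip_poly q x = (if x > 0 then poly q (1 / x) * exp (- (1 / x)) else 0)"

text \<open>For \<open>x > 0\<close>: \<open>d/dx (q(1/x) exp(-1/x)) = x^-2 (q - q')(1/x) exp(-1/x)\<close>.\<close>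

definition exp_recip_dpoly :: "real poly \<Rightarrow> real poly" where
  "exp_recip_dpoly q = [:0, 0, 1:] * (q - pderiv q)"

lemma poly_times_exp_neg_tendsto_0:
  fixes q :: "real poly"
  shows "((\<lambda>z. poly q z * exp (- z)) \<longlongrightarrow> 0) at_top"
proof -
  have "(\<lambda>z. poly q z * exp (- z)) = (\<lambda>z. \<Sum>i\<le>degree q. coeff q i * (z ^ i / exp z))"
    by (auto simp: poly_altdef sum_distrib_right sum_divide_distrib exp_minus field_simps)
  moreover have "((\<lambda>z. \<Sum>i\<le>degree q. coeff q i * (z ^ i / exp z)) \<longlongrightarrow> (\<Sum>i\<le>degree q. coeff q i * 0)) at_top"
    by (intro tendsto_sum tendsto_mult tendsto_const tendsto_power_div_exp_0)
  ultimately show ?thesis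
    by simp
qed

lemma exp_recip_poly_DERIV:
  "(exp_recip_poly q has_real_derivative exp_recip_poly (exp_recip_dpoly q) x) (at x)"
proof (cases x "0 :: real" rule: linorder_cases)
  case greater
  have "((\<lambda>x. poly q (1 / x) * exp (- (1 / x))) has_real_derivative exp_recip_poly (exp_recip_dpoly q) x) (at x)"
    using greater
    by (auto intro!: derivative_eq_intros DERIV_chain2[OF poly_DERIV]
        simp: exp_recip_poly_def exp_recip_dpoly_def power2_eq_square field_simps)
  then show ?thesis
    by (rule has_field_derivative_transform_within_open[of _ _ _ "{0<..}"])
      (use greater in \<open>auto simp: exp_recip_poly_def\<close>)
next
  case less
  have "((\<lambda>x. 0) has_real_derivative exp_recip_poly (exp_recip_dpoly q) x) (at x)"
    using less by (auto simp: exp_recip_poly_def)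
  then show ?thesis
    by (rule has_field_derivative_transform_within_open[of _ _ _ "{..<0}"])
      (use less in \<open>auto simp: exp_recip_poly_def\<close>)
next
  case equal
  have "((\<lambda>y. (exp_recip_poly q y - exp_recip_poly q 0) / (y - 0)) \<longlongrightarrow> 0) (at 0)"
  proof (rule filterlim_split_at)
    show "((\<lambda>y. (exp_recip_poly q y - exp_recip_poly q 0) / (y - 0)) \<longlongrightarrow> 0) (at_left 0)"
      by (rule tendsto_eventually, rule eventually_mono[OF eventually_at_left_real[of "-1" 0]])
        (auto simp: exp_recip_poly_def)
  next
    have "((\<lambda>y. poly (pCons 0 q) (1 / y) * exp (- (1 / y))) \<longlongrightarrow> 0) (at_right 0)"
      using filterlim_compose[OF poly_times_exp_neg_tendsto_0[of "pCons 0 q"] filterlim_inverse_at_top_right]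
      by (simp add: inverse_eq_divide)
    then show "((\<lambda>y. (exp_recip_poly q y - exp_recip_poly q 0) / (y - 0)) \<longlongrightarrow> 0) (at_right 0)"
      by (rule Lim_transform_eventually, intro eventually_mono[OF eventually_at_right_real[of 0 1]])
        (auto simp: exp_recip_poly_def field_simps)
  qed
  then show ?thesis
    using equal by (simp add: has_field_derivative_iff exp_recip_poly_def)
qed

lemma smooth_real_exp_recip_poly: "smooth_real (exp_recip_poly q)"
proof (coinduction arbitrary: q rule: smooth_real.coinduct)
  case (smooth_real q)
  have "deriv (exp_recip_poly q) = exp_recip_poly (exp_recip_dpoly q)"
    using exp_recip_poly_DERIV DERIV_imp_deriv by blast
  then show ?case
    using exp_recip_poly_DERIV real_differentiable_def by blast
qed

definition interval_bump :: "nat \<Rightarrow> real \<Rightarrow> real \<Rightarrow> real \<Rightarrow> real" where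
  "interval_bump n c d y =
     exp_recip_poly 1 (real (Suc n) * (y - c)) * exp_recip_poly 1 (real (Suc n) * (d - y))"

lemma smooth_real_interval_bump: "smooth_real (interval_bump n c d)"
proof -
  have "smooth_real (\<lambda>y. 1 * exp_recip_poly 1 (real (Suc n) * y + - real (Suc n) * c))"
    and "smooth_real (\<lambda>y. 1 * exp_recip_poly 1 (- real (Suc n) * y + real (Suc n) * d))"
    by (intro smooth_real_affine smooth_real_exp_recip_poly)+
  from smooth_real_mult[OF this] show ?thesis
    by (simp add: interval_bump_def[abs_def] algebra_simps)
qed

lemma interval_bump_bounds: "0 \<le> interval_bump n c d y" "interval_bump n c d y \<le> 1"
  by (auto simp: interval_bump_def exp_recip_poly_def intro: mult_le_one)

lemma interval_bump_eq_0: "y \<le> c \<or> d \<le> y \<Longrightarrow> interval_bump n c d y = 0"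
  by (auto simp: interval_bump_def exp_recip_poly_def zero_less_mult_iff)

lemma exp_recip_poly_1_scaled_tendsto_1:
  assumes "t > 0" shows "(\<lambda>n. exp_recip_poly 1 (real (Suc n) * t)) \<longlonglongrightarrow> 1"
proof -
  have "(\<lambda>n. exp (- (1 / t * inverse (real (Suc n))))) \<longlonglongrightarrow> exp (- (1 / t * 0))"
    by (intro tendsto_intros LIMSEQ_inverse_real_of_nat)
  moreover have "exp_recip_poly 1 (real (Suc n) * t) = exp (- (1 / t * inverse (real (Suc n))))" for n
    using assms by (simp add: exp_recip_poly_def divide_inverse mult.commute)
  ultimately show ?thesis
    by simp
qed

lemma interval_bump_tendsto: "(\<lambda>n. interval_bump n c d y) \<longlonglongrightarrow> (if c < y \<and> y < d then 1 else 0)"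
proof (cases "c < y \<and> y < d")
  case True
  then have "(\<lambda>n. interval_bump n c d y) \<longlonglongrightarrow> 1 * 1"
    unfolding interval_bump_def by (intro tendsto_mult exp_recip_poly_1_scaled_tendsto_1) auto
  with True show ?thesis
    by simp
next
  case False
  then show ?thesis
    using interval_bump_eq_0[of y c d] by auto
qed

section \<open>Smooth bump functions on cubes\<close>

lemma smooth_differentiable: "smooth f \<Longrightarrow> f differentiable (at x)"
  by (erule smooth.cases) auto

lemma smooth_partial_derivative:
  "smooth f \<Longrightarrow> b \<in> Basis \<Longrightarrow> smooth (\<lambda>x. frechet_derivative f (at x) b)"
  by (erule smooth.cases) auto

lemma smooth_continuous: "smooth f \<Longrightarrow> continuous_on UNIV f"
  by (meson continuous_at_imp_continuous_on differentiable_imp_continuous_within smooth_differentiable)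

lemma smooth_tensor_product:
  fixes G :: "'a::euclidean_space \<Rightarrow> real \<Rightarrow> real"
  assumes "\<forall>i\<in>Basis. smooth_real (G i)"
  shows "smooth (\<lambda>x::'a. \<Prod>i\<in>Basis. G i (x \<bullet> i))"
  using assms
proof (coinduction arbitrary: G rule: smooth.coinduct)
  case (smooth G)
  have "((\<lambda>x. G i (x \<bullet> i)) has_derivative (\<lambda>v. deriv (G i) (x \<bullet> i) * (v \<bullet> i))) (at x)"
    if "i \<in> Basis" for i and x :: 'a
  proof -
    have "(G i has_derivative (*) (deriv (G i) (x \<bullet> i))) (at (x \<bullet> i))"
      using smooth_real_DERIV smooth that by (simp add: has_field_derivative_def)
    from has_derivative_compose[OF has_derivative_inner_left[OF has_derivative_ident] this]
    show ?thesis
      by (simp add: o_def)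
  qed
  then have D: "((\<lambda>x. \<Prod>i\<in>Basis. G i (x \<bullet> i)) has_derivative
      (\<lambda>v. \<Sum>i\<in>Basis. deriv (G i) (x \<bullet> i) * (v \<bullet> i) * (\<Prod>j\<in>Basis - {i}. G j (x \<bullet> j)))) (at x)"
    for x
    by (rule has_derivative_prod)
  have partial: "frechet_derivative (\<lambda>x. \<Prod>i\<in>Basis. G i (x \<bullet> i)) (at x) b
      = (\<Prod>j\<in>Basis. (G(b := deriv (G b))) j (x \<bullet> j))" if b: "b \<in> Basis" for x b
  proof -
    have "frechet_derivative (\<lambda>x. \<Prod>i\<in>Basis. G i (x \<bullet> i)) (at x) b
        = (\<Sum>i\<in>Basis. deriv (G i) (x \<bullet> i) * (b \<bullet> i) * (\<Prod>j\<in>Basis - {i}. G j (x \<bullet> j)))"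
      by (simp add: frechet_derivative_at[OF D[of x], symmetric])
    also have "\<dots> = deriv (G b) (x \<bullet> b) * (\<Prod>j\<in>Basis - {b}. G j (x \<bullet> j))"
      using b by (subst sum.remove[of _ b]) (auto simp: inner_Basis intro!: sum.neutral split: if_splits)
    also have "\<dots> = (\<Prod>j\<in>Basis. (G(b := deriv (G b))) j (x \<bullet> j))"
      using b by (simp add: prod.remove[of Basis b])
    finally show ?thesis .
  qed
  have "\<exists>G'. (\<forall>i\<in>Basis. smooth_real (G' i)) \<and>
      (\<lambda>x. frechet_derivative (\<lambda>x. \<Prod>i\<in>Basis. G i (x \<bullet> i)) (at x) b) = (\<lambda>x. \<Prod>i\<in>Basis. G' i (x \<bullet> i))"
    if "b \<in> Basis" for b
    using smooth that partial by (intro exI[of _ "G(b := deriv (G b))"]) (auto intro: smooth_real_deriv)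
  then show ?case
    using D differentiableI by blast
qed

definition cube_bump :: "nat \<Rightarrow> 'a::euclidean_space \<Rightarrow> real \<Rightarrow> 'a \<Rightarrow> real" where
  "cube_bump n a r x = (\<Prod>i\<in>Basis. interval_bump n (a \<bullet> i) (a \<bullet> i + r) (x \<bullet> i))"

lemma smooth_cube_bump: "smooth (cube_bump n a r)"
  unfolding cube_bump_def[abs_def]
  by (rule smooth_tensor_product[of "\<lambda>i. interval_bump n (a \<bullet> i) (a \<bullet> i + r)"])
    (simp add: smooth_real_interval_bump)

lemma cube_bump_eq_0:
  assumes "x \<notin> cbox a (a + r *\<^sub>R One)"
  shows "cube_bump n a r x = 0"
proof -
  from assms obtain i where "i \<in> Basis" "x \<bullet> i < a \<bullet> i \<or> a \<bullet> i + r < x \<bullet> i"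
    by (auto simp: mem_box inner_add_left not_le)
  then show ?thesis
    unfolding cube_bump_def by (intro prod_zero bexI[of _ i] interval_bump_eq_0) auto
qed

lemma test_function_cube_bump: "test_function (cube_bump n a r)"
  unfolding test_function_def compact_support_def
  using smooth_cube_bump cube_bump_eq_0 compact_cbox by metis

lemma cube_bump_bounds: "0 \<le> cube_bump n a r x" "cube_bump n a r x \<le> 1"
  unfolding cube_bump_def using interval_bump_bounds by (auto intro!: prod_nonneg prod_le_1)

lemma cube_bump_tendsto: "(\<lambda>n. cube_bump n a r x) \<longlonglongrightarrow> indicator (box a (a + r *\<^sub>R One)) x"
proof -
  have "(\<lambda>n. cube_bump n a r x) \<longlonglongrightarrow> (\<Prod>i\<in>Basis. if a \<bullet> i < x \<bullet> i \<and> x \<bullet> i < a \<bullet> i + r then 1 else 0)"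
    unfolding cube_bump_def by (intro tendsto_prod interval_bump_tendsto)
  also have "(\<Prod>i\<in>Basis. if a \<bullet> i < x \<bullet> i \<and> x \<bullet> i < a \<bullet> i + r then 1 else 0)
      = (indicator (box a (a + r *\<^sub>R One)) x :: real)"
    by (simp add: mem_box inner_add_left indicator_def)
  finally show ?thesis .
qed

lemma continuous_borel_measurable_lebesgue:
  "continuous_on UNIV f \<Longrightarrow> (f :: 'a::euclidean_space \<Rightarrow> real) \<in> borel_measurable lebesgue"
  using continuous_imp_measurable_on_sets_lebesgue[of UNIV f] by (simp add: lebesgue_on_UNIV_eq)

lemma continuous_compact_support_bounded:
  fixes \<phi> :: "'a::euclidean_space \<Rightarrow> real"
  assumes "continuous_on UNIV \<phi>" "compact K" "\<And>x. x \<notin> K \<Longrightarrow> \<phi> x = 0"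
  obtains B where "B \<ge> 0" "\<And>x. \<bar>\<phi> x\<bar> \<le> B"
proof -
  have "compact (\<phi> ` K)"
    using assms by (intro compact_continuous_image) (auto intro: continuous_on_subset)
  then obtain B where B: "\<And>y. y \<in> \<phi> ` K \<Longrightarrow> norm y \<le> B"
    by (meson bounded_iff compact_imp_bounded)
  have "\<bar>\<phi> x\<bar> \<le> max B 0" for x
    using B[of "\<phi> x"] assms(3)[of x] by (cases "x \<in> K") auto
  then show ?thesis
    using that[of "max B 0"] by auto
qed

lemma lborel_integrable_continuous_compact_support:
  fixes f :: "'a::euclidean_space \<Rightarrow> real"
  assumes "continuous_on UNIV f" "compact K" "\<And>x. x \<notin> K \<Longrightarrow> f x = 0"
  shows "integrable lborel f"
proof -
  obtain B where "B \<ge> 0" and B: "\<And>x. \<bar>f x\<bar> \<le> B"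
    using continuous_compact_support_bounded[OF assms] by blast
  show ?thesis
  proof (rule Bochner_Integration.integrable_bound[where f="\<lambda>x. B * indicator K x"])
    show "integrable lborel (\<lambda>x. B * indicator K x)"
      using assms(2) emeasure_bounded_finite[OF compact_imp_bounded[OF assms(2)]]
      by (simp add: compact_imp_closed)
    show "f \<in> borel_measurable lborel"
      using borel_measurable_continuous_onI[OF assms(1)] by simp
    show "AE x in lborel. norm (f x) \<le> norm (B * indicator K x)"
      using \<open>B \<ge> 0\<close> B assms(3) by (intro AE_I2) (simp add: indicator_def)
  qed
qed

lemma lebesgue_integrable_continuous_compact_support:
  fixes f :: "'a::euclidean_space \<Rightarrow> real"
  assumes "continuous_on UNIV f" "compact K" "\<And>x. x \<notin> K \<Longrightarrow> f x = 0"
  shows "integrable lebesgue f"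
  using lborel_integrable_continuous_compact_support[OF assms] integrable_completion[of f lborel]
    borel_measurable_continuous_onI[OF assms(1)]
  by simp

lemma continuous_locally_integrable:
  fixes f :: "'a::euclidean_space \<Rightarrow> real"
  assumes "continuous_on UNIV f"
  shows "locally_integrable f"
  unfolding locally_integrable_def
proof (intro allI impI)
  fix K :: "'a set"
  assume "compact K"
  then obtain a where K: "K \<subseteq> cbox (- a) a"
    using bounded_subset_cbox_symmetric[OF compact_imp_bounded] by blast
  have "set_integrable lebesgue (cbox (- a) a) f"
    by (rule absolutely_integrable_continuous[OF continuous_on_subset[OF assms subset_UNIV]])
  moreover have "K \<in> sets lebesgue"
    using lmeasurable_compact[OF \<open>compact K\<close>] by (rule fmeasurableD)
  ultimately show "set_integrable lebesgue K f"
    using K by (rule set_integrable_subset)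
qed

lemma integrable_locally_integrable_times:
  fixes G \<phi> :: "'a::euclidean_space \<Rightarrow> real"
  assumes G: "locally_integrable G" and \<phi>: "continuous_on UNIV \<phi>"
    and K: "compact K" and \<phi>0: "\<And>x. x \<notin> K \<Longrightarrow> \<phi> x = 0"
  shows "integrable lebesgue (\<lambda>x. G x * \<phi> x)"
proof -
  obtain B where "B \<ge> 0" and B: "\<And>x. \<bar>\<phi> x\<bar> \<le> B"
    using continuous_compact_support_bounded[OF \<phi> K \<phi>0] by blast
  have int_GK: "integrable lebesgue (\<lambda>x. indicator K x * G x)"
    using G K by (simp add: locally_integrable_def set_integrable_def)
  have "(\<lambda>x. G x * \<phi> x) = (\<lambda>x. indicator K x * G x * \<phi> x)"
    using \<phi>0 by (auto simp: indicator_def fun_eq_iff)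
  moreover have "integrable lebesgue (\<lambda>x. indicator K x * G x * \<phi> x)"
  proof (rule Bochner_Integration.integrable_bound[OF integrable_mult_right[OF int_GK, of B]])
    show "(\<lambda>x. indicator K x * G x * \<phi> x) \<in> borel_measurable lebesgue"
      using int_GK continuous_borel_measurable_lebesgue[OF \<phi>] by measurable
    show "AE x in lebesgue. norm (indicator K x * G x * \<phi> x) \<le> norm (B * (indicator K x * G x))"
    proof (intro AE_I2)
      fix x
      have "\<bar>indicator K x * G x\<bar> * \<bar>\<phi> x\<bar> \<le> \<bar>indicator K x * G x\<bar> * B"
        using B by (rule mult_left_mono) simp
      with \<open>B \<ge> 0\<close> show "norm (indicator K x * G x * \<phi> x) \<le> norm (B * (indicator K x * G x))"
        by (simp add: abs_mult mult.commute)
    qed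
  qed
  ultimately show ?thesis
    by simp
qed

text \<open>Lebesgue measure is complete, so a function a.e. equal to a non-measurable one is itself
  non-measurable; hence no measurability hypotheses are needed.\<close>

lemma lebesgue_integral_cong_AE:
  fixes f g :: "'a::euclidean_space \<Rightarrow> 'b::euclidean_space"
  assumes "AE x in lebesgue. f x = g x"
  shows "integral\<^sup>L lebesgue f = integral\<^sup>L lebesgue g"
proof (cases "f \<in> borel_measurable lebesgue")
  case True
  then show ?thesis
    by (rule integral_cong_AE[OF _ borel_measurable_AE[OF True assms] assms])
next
  case False
  have "AE x in lebesgue. g x = f x"
    using assms by auto
  with False have "g \<notin> borel_measurable lebesgue"
    using borel_measurable_AE by blast
  with False show ?thesis
    using borel_measurable_integrable not_integrable_integral_eq by metis
qed

lemma lebesgue_integrable_cong_AE: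
  fixes f g :: "'a::euclidean_space \<Rightarrow> 'b::euclidean_space"
  assumes "AE x in lebesgue. f x = g x"
  shows "integrable lebesgue f \<longleftrightarrow> integrable lebesgue g"
proof (cases "f \<in> borel_measurable lebesgue")
  case True
  then show ?thesis
    by (rule integrable_cong_AE[OF _ borel_measurable_AE[OF True assms] assms])
next
  case False
  have "AE x in lebesgue. g x = f x"
    using assms by auto
  with False have "g \<notin> borel_measurable lebesgue"
    using borel_measurable_AE by blast
  with False show ?thesis
    by auto
qed

lemma frechet_derivative_eq_0_outside:
  fixes \<phi> :: "'a::euclidean_space \<Rightarrow> real"
  assumes "closed K" "\<And>y. y \<notin> K \<Longrightarrow> \<phi> y = 0" "x \<notin> K"
  shows "frechet_derivative \<phi> (at x) = (\<lambda>v. 0)"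
proof -
  have "(\<phi> has_derivative (\<lambda>v. 0)) (at x)"
    by (rule has_derivative_transform_within_open[OF has_derivative_const open_Compl[OF assms(1)]])
      (use assms in auto)
  then show ?thesis
    using frechet_derivative_at by metis
qed

lemma lborel_integral_translate:
  fixes f :: "'a::euclidean_space \<Rightarrow> real"
  assumes "f \<in> borel_measurable borel"
  shows "integral\<^sup>L lborel (\<lambda>x. f (x + c)) = integral\<^sup>L lborel f"
    and "integrable lborel (\<lambda>x. f (x + c)) \<longleftrightarrow> integrable lborel f"
proof -
  have "integral\<^sup>L lborel f = integral\<^sup>L (distr lborel borel ((+) c)) f"
    by (simp add: lborel_distr_plus)
  also have "\<dots> = integral\<^sup>L lborel (\<lambda>x. f (c + x))"
    using assms by (intro integral_distr) auto
  finally show "integral\<^sup>L lborel (\<lambda>x. f (x + c)) = integral\<^sup>L lborel f"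
    by (simp add: add.commute)
  have "integrable lborel f \<longleftrightarrow> integrable (distr lborel borel ((+) c)) f"
    by (simp add: lborel_distr_plus)
  also have "\<dots> \<longleftrightarrow> integrable lborel (\<lambda>x. f (c + x))"
    using assms by (intro integrable_distr_eq) auto
  finally show "integrable lborel (\<lambda>x. f (x + c)) \<longleftrightarrow> integrable lborel f"
    by (simp add: add.commute)
qed

lemma has_real_derivative_along_line:
  assumes "\<And>x. (F has_derivative F' x) (at x)"
  shows "((\<lambda>t. F (x + t *\<^sub>R e)) has_real_derivative F' (x + t *\<^sub>R e) e) (at t)"
proof -
  have "((\<lambda>t. x + t *\<^sub>R e) has_derivative (\<lambda>h. h *\<^sub>R e)) (at t)"
    by (auto intro!: derivative_eq_intros)
  from has_derivative_compose[OF this assms]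
  have "((\<lambda>t. F (x + t *\<^sub>R e)) has_derivative (\<lambda>h. F' (x + t *\<^sub>R e) (h *\<^sub>R e))) (at t)"
    by (simp add: o_def)
  moreover have "F' (x + t *\<^sub>R e) (h *\<^sub>R e) = F' (x + t *\<^sub>R e) e * h" for h
    using has_derivative_linear[OF assms] by (simp add: linear_scale)
  ultimately have "((\<lambda>t. F (x + t *\<^sub>R e)) has_derivative (\<lambda>h. F' (x + t *\<^sub>R e) e * h)) (at t)"
    by (simp add: mult.commute)
  then show ?thesis
    by (simp add: has_field_derivative_def)
qed

lemma abs_difference_along_line_le:
  assumes "\<And>x. (F has_derivative F' x) (at x)" "\<And>y. \<bar>F' y e\<bar> \<le> B" "s > 0"
  shows "\<bar>F (x + s *\<^sub>R e) - F x\<bar> \<le> s * B"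
proof -
  have "\<exists>t\<in>{0<..<s}. F (x + s *\<^sub>R e) - F (x + 0 *\<^sub>R e) = F' (x + t *\<^sub>R e) e * (s - 0)"
  proof (rule mvt_simple)
    fix t
    show "((\<lambda>t. F (x + t *\<^sub>R e)) has_derivative (\<lambda>h. F' (x + t *\<^sub>R e) e * h)) (at t within {0..s})"
      using has_real_derivative_along_line[OF assms(1)] unfolding has_field_derivative_def
      by (rule has_derivative_at_withinI)
  qed (rule assms(3))
  then obtain t where "F (x + s *\<^sub>R e) - F x = F' (x + t *\<^sub>R e) e * s"
    by auto
  then have "\<bar>F (x + s *\<^sub>R e) - F x\<bar> = \<bar>F' (x + t *\<^sub>R e) e\<bar> * s"
    using assms(3) by (simp add: abs_mult)
  also have "\<dots> \<le> B * s"
    using assms(2,3) by (intro mult_right_mono) auto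
  finally show ?thesis
    by (simp add: mult.commute)
qed

lemma difference_quotient_tendsto:
  assumes "\<And>x. (F has_derivative F' x) (at x)"
  shows "(\<lambda>n. (F (x + (1 / real (Suc n)) *\<^sub>R e) - F x) / (1 / real (Suc n))) \<longlonglongrightarrow> F' x e"
proof -
  have "((\<lambda>h. (F (x + h *\<^sub>R e) - F x) / h) \<longlongrightarrow> F' x e) (at 0)"
    using has_real_derivative_along_line[OF assms, of x e 0] by (simp add: has_field_derivative_iff)
  moreover have "filterlim (\<lambda>n. 1 / real (Suc n)) (at 0) sequentially"
    using LIMSEQ_Suc[OF lim_const_over_n[of 1]] by (simp add: filterlim_at)
  ultimately show ?thesis
    by (rule filterlim_compose)
qed

lemma abs_difference_quotient_le:
  assumes D: "\<And>x. (F has_derivative F' x) (at x)" and B: "\<And>y. \<bar>F' y e\<bar> \<le> B"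
    and F0: "\<And>x. x \<notin> cball 0 R \<Longrightarrow> F x = 0" and s: "0 < s" "s \<le> 1"
  shows "\<bar>(F (x + s *\<^sub>R e) - F x) / s\<bar> \<le> B * indicator (cball 0 (R + norm e)) x"
proof (cases "x \<in> cball 0 (R + norm e)")
  case True
  then show ?thesis
    using abs_difference_along_line_le[OF D B s(1), of x] s(1) by (simp add: abs_div divide_le_eq mult.commute)
next
  case False
  have "norm (x + s *\<^sub>R e) \<ge> norm x - s * norm e"
    using norm_triangle_ineq2[of x "- s *\<^sub>R e"] s(1) by simp
  moreover have "s * norm e \<le> norm e"
    using s by (intro mult_left_le_one_le) auto
  moreover have "norm x > R + norm e"
    using False by simp
  ultimately have "norm x > R" "norm (x + s *\<^sub>R e) > R"
    using norm_ge_zero[of e] by linarith+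
  with False show ?thesis
    by (simp add: F0)
qed

lemma lborel_integral_directional_derivative_eq_0:
  fixes F :: "'a::euclidean_space \<Rightarrow> real"
  assumes D: "\<And>x. (F has_derivative F' x) (at x)"
    and cont: "continuous_on UNIV (\<lambda>x. F' x e)"
    and K: "compact K" and F0: "\<And>x. x \<notin> K \<Longrightarrow> F x = 0"
  shows "integral\<^sup>L lborel (\<lambda>x. F' x e) = 0"
proof -
  have F_cont: "continuous_on UNIV F"
    using D by (meson continuous_at_imp_continuous_on has_derivative_continuous)
  then have F_meas: "F \<in> borel_measurable borel"
    by (rule borel_measurable_continuous_onI)
  have "F' x e = 0" if "x \<notin> K" for x
    using frechet_derivative_eq_0_outside[OF compact_imp_closed[OF K] F0 that]
      frechet_derivative_at[OF D[of x]] by simp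
  then obtain B where B: "\<And>x. \<bar>F' x e\<bar> \<le> B"
    using continuous_compact_support_bounded[OF cont K] by blast
  obtain R where "\<forall>x\<in>K. norm x \<le> R"
    using compact_imp_bounded[OF K] unfolding bounded_iff by blast
  with F0 have F0_ball: "\<And>x. x \<notin> cball 0 R \<Longrightarrow> F x = 0"
    by force
  define Q where "Q n x = (F (x + (1 / real (Suc n)) *\<^sub>R e) - F x) / (1 / real (Suc n))" for n x
  have "integral\<^sup>L lborel (Q n) = 0" for n
    using lborel_integral_translate[OF F_meas]
      lborel_integrable_continuous_compact_support[OF F_cont K F0] by (simp add: Q_def[abs_def])
  moreover have "(\<lambda>n. integral\<^sup>L lborel (Q n)) \<longlonglongrightarrow> integral\<^sup>L lborel (\<lambda>x. F' x e)"
  proof (rule integral_dominated_convergence[where w="\<lambda>x. B * indicator (cball 0 (R + norm e)) x"])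
    show "(\<lambda>x. F' x e) \<in> borel_measurable lborel"
      using borel_measurable_continuous_onI[OF cont] by simp
    show "Q n \<in> borel_measurable lborel" for n
      unfolding Q_def[abs_def] using F_meas by measurable
    show "integrable lborel (\<lambda>x. B * indicator (cball 0 (R + norm e)) x)"
      using emeasure_bounded_finite[of "cball 0 (R + norm e)"]
      by (intro integrable_mult_right integrable_real_indicator) auto
    show "AE x in lborel. (\<lambda>n. Q n x) \<longlonglongrightarrow> F' x e"
      unfolding Q_def by (intro AE_I2 difference_quotient_tendsto D)
    show "AE x in lborel. norm (Q n x) \<le> B * indicator (cball 0 (R + norm e)) x" for n
      unfolding Q_def real_norm_def by (intro AE_I2 abs_difference_quotient_le[OF D B F0_ball]) auto
  qed
  ultimately have "(\<lambda>n. 0) \<longlonglongrightarrow> integral\<^sup>L lborel (\<lambda>x. F' x e)"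
    by simp
  then show ?thesis
    using LIMSEQ_unique[OF tendsto_const] by metis
qed

lemma test_function_continuous: "test_function \<phi> \<Longrightarrow> continuous_on UNIV \<phi>"
  by (simp add: test_function_def smooth_continuous)

lemma test_function_has_derivative:
  "test_function \<phi> \<Longrightarrow> (\<phi> has_derivative frechet_derivative \<phi> (at x)) (at x)"
  by (simp add: test_function_def smooth_differentiable frechet_derivative_works[symmetric])

lemma test_function_partial_continuous:
  "test_function \<phi> \<Longrightarrow> b \<in> Basis \<Longrightarrow> continuous_on UNIV (\<lambda>x. frechet_derivative \<phi> (at x) b)"
  by (simp add: test_function_def smooth_continuous smooth_partial_derivative)

lemma cgrad_inner_Basis: "b \<in> Basis \<Longrightarrow> cgrad \<phi> x \<bullet> b = frechet_derivative \<phi> (at x) b"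
  unfolding cgrad_def inner_sum_left
  by (subst sum.remove[of _ b]) (auto simp: inner_Basis intro!: sum.neutral split: if_splits)

lemma cgrad_eq_0_outside:
  "closed K \<Longrightarrow> (\<And>y. y \<notin> K \<Longrightarrow> \<phi> y = 0) \<Longrightarrow> x \<notin> K \<Longrightarrow> cgrad \<phi> x = 0"
  by (simp add: cgrad_def frechet_derivative_eq_0_outside)

lemma continuous_cgrad: "test_function \<phi> \<Longrightarrow> continuous_on UNIV (cgrad \<phi>)"
  unfolding cgrad_def[abs_def] by (intro continuous_intros test_function_partial_continuous)

lemma integral_by_parts_test_functions:
  assumes \<psi>: "test_function \<psi>" and \<phi>: "test_function \<phi>" and b: "b \<in> Basis"
  shows "(\<integral>x. \<psi> x * frechet_derivative \<phi> (at x) b \<partial>lebesgue)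
       = - (\<integral>x. frechet_derivative \<psi> (at x) b * \<phi> x \<partial>lebesgue)"
proof -
  obtain K where K: "compact K" and \<psi>0: "\<And>x. x \<notin> K \<Longrightarrow> \<psi> x = 0"
    using \<psi> unfolding test_function_def compact_support_def by blast
  let ?A = "\<lambda>x. \<psi> x * frechet_derivative \<phi> (at x) b"
  let ?B = "\<lambda>x. frechet_derivative \<psi> (at x) b * \<phi> x"
  have cont_A: "continuous_on UNIV ?A"
    by (rule continuous_on_mult[OF test_function_continuous[OF \<psi>] test_function_partial_continuous[OF \<phi> b]])
  have cont_B: "continuous_on UNIV ?B"
    by (rule continuous_on_mult[OF test_function_partial_continuous[OF \<psi> b] test_function_continuous[OF \<phi>]])
  have "?A x = 0" "?B x = 0" if "x \<notin> K" for x
    using \<psi>0[OF that] frechet_derivative_eq_0_outside[OF compact_imp_closed[OF K] \<psi>0 that] by simp_all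
  then have int_A: "integrable lborel ?A" and int_B: "integrable lborel ?B"
    using lborel_integrable_continuous_compact_support[OF _ K] cont_A cont_B by blast+
  have "integral\<^sup>L lborel (\<lambda>x. ?A x + ?B x) = 0"
  proof (rule lborel_integral_directional_derivative_eq_0[OF has_derivative_mult[OF
        test_function_has_derivative[OF \<psi>] test_function_has_derivative[OF \<phi>]] _ K])
    show "continuous_on UNIV (\<lambda>x. ?A x + ?B x)"
      by (intro continuous_intros cont_A cont_B)
    show "\<psi> x * \<phi> x = 0" if "x \<notin> K" for x
      using \<psi>0[OF that] by simp
  qed
  then have "integral\<^sup>L lborel ?A = - integral\<^sup>L lborel ?B"
    using int_A int_B by simp
  moreover have "integral\<^sup>L lebesgue ?A = integral\<^sup>L lborel ?A" "integral\<^sup>L lebesgue ?B = integral\<^sup>L lborel ?B"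
    using cont_A cont_B by (auto intro!: integral_completion borel_measurable_continuous_onI)
  ultimately show ?thesis
    by simp
qed

lemma weak_gradient_cgrad:
  assumes \<psi>: "test_function \<psi>"
  shows "weak_gradient \<psi> (cgrad \<psi>)"
  unfolding weak_gradient_def
proof (intro conjI ballI allI impI)
  show "locally_integrable \<psi>"
    using \<psi> by (intro continuous_locally_integrable test_function_continuous)
  show "locally_integrable (\<lambda>x. cgrad \<psi> x \<bullet> b)" if "b \<in> Basis" for b
    using \<psi> that by (simp add: cgrad_inner_Basis continuous_locally_integrable test_function_partial_continuous)
  show "(\<integral>x. \<psi> x * frechet_derivative \<phi> (at x) b \<partial>lebesgue) = - (\<integral>x. (cgrad \<psi> x \<bullet> b) * \<phi> x \<partial>lebesgue)"
    if "test_function \<phi>" "b \<in> Basis" for \<phi> b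
    using \<psi> that by (simp add: cgrad_inner_Basis integral_by_parts_test_functions)
qed

lemma W1p_test_function:
  assumes \<psi>: "test_function \<psi>" and "0 < p"
  shows "W1p p \<psi>"
proof -
  obtain K where K: "compact K" and \<psi>0: "\<And>x. x \<notin> K \<Longrightarrow> \<psi> x = 0"
    using \<psi> unfolding test_function_def compact_support_def by blast
  have integrable_powr: "integrable lebesgue (\<lambda>x. \<bar>f x\<bar> powr p)"
    if "continuous_on UNIV f" "\<And>x. x \<notin> K \<Longrightarrow> f x = 0" for f :: "'a \<Rightarrow> real"
  proof (rule lebesgue_integrable_continuous_compact_support[OF _ K])
    show "continuous_on UNIV (\<lambda>x. \<bar>f x\<bar> powr p)"
      by (rule continuous_on_powr') (use that \<open>0 < p\<close> in \<open>auto intro: continuous_on_rabs\<close>)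
  qed (use that in simp)
  have "integrable lebesgue (\<lambda>x. \<bar>norm (cgrad \<psi> x)\<bar> powr p)"
    using continuous_cgrad[OF \<psi>] cgrad_eq_0_outside[OF compact_imp_closed[OF K] \<psi>0]
    by (intro integrable_powr) (auto intro: continuous_on_norm)
  moreover have "integrable lebesgue (\<lambda>x. \<bar>\<psi> x\<bar> powr p)"
    by (rule integrable_powr[OF test_function_continuous[OF \<psi>] \<psi>0])
  ultimately show ?thesis
    unfolding W1p_def Lp_def using weak_gradient_cgrad[OF \<psi>] continuous_cgrad[OF \<psi>]
      test_function_continuous[OF \<psi>]
    by (auto intro!: exI[of _ "cgrad \<psi>"] continuous_borel_measurable_lebesgue continuous_on_norm)
qed

section \<open>The fundamental lemma of the calculus of variations\<close>

lemma integral_cube_eq_0_if_orthogonal_to_bumps: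
  fixes h :: "'a::euclidean_space \<Rightarrow> real"
  assumes h: "integrable lebesgue h" and orth: "\<And>n. (\<integral>x. h x * cube_bump n a r x \<partial>lebesgue) = 0"
  shows "integral (cbox a (a + r *\<^sub>R One)) h = 0"
proof -
  let ?B = "box a (a + r *\<^sub>R One)"
  have int_B: "set_integrable lebesgue ?B h"
    unfolding set_integrable_def by (rule integrable_mult_indicator[OF _ h]) auto
  have "(\<lambda>n. \<integral>x. h x * cube_bump n a r x \<partial>lebesgue) \<longlonglongrightarrow> (\<integral>x. h x * indicator ?B x \<partial>lebesgue)"
  proof (rule integral_dominated_convergence[where w="\<lambda>x. norm (h x)"])
    show "(\<lambda>x. h x * indicator ?B x) \<in> borel_measurable lebesgue"
      using int_B by (simp add: set_integrable_def mult.commute)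
    show "(\<lambda>x. h x * cube_bump n a r x) \<in> borel_measurable lebesgue" for n
      using h smooth_continuous[OF smooth_cube_bump] continuous_borel_measurable_lebesgue
      by (intro borel_measurable_times) auto
    show "AE x in lebesgue. (\<lambda>n. h x * cube_bump n a r x) \<longlonglongrightarrow> h x * indicator ?B x"
      by (intro AE_I2 tendsto_mult tendsto_const cube_bump_tendsto)
    show "AE x in lebesgue. norm (h x * cube_bump n a r x) \<le> norm (h x)" for n
      using cube_bump_bounds[of n a r] by (intro AE_I2) (simp add: abs_mult mult_left_le)
  qed (use h in simp)
  with orth have "(\<lambda>n. 0) \<longlonglongrightarrow> (\<integral>x. h x * indicator ?B x \<partial>lebesgue)"
    by simp
  then have "(\<integral>x. h x * indicator ?B x \<partial>lebesgue) = 0"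
    using LIMSEQ_unique[OF tendsto_const] by metis
  then have "integral ?B h = 0"
    using set_lebesgue_integral_eq_integral(2)[OF int_B]
    by (simp add: set_lebesgue_integral_def mult.commute)
  then show ?thesis
    by (simp add: integral_open_interval)
qed

lemma cube_subset_cball:
  fixes x :: "'a::euclidean_space"
  assumes "0 \<le> r"
  shows "cbox x (x + r *\<^sub>R One) \<subseteq> cball x (r * norm (One :: 'a))"
proof
  fix z
  assume "z \<in> cbox x (x + r *\<^sub>R One)"
  then have "\<bar>(z - x) \<bullet> b\<bar> \<le> \<bar>(r *\<^sub>R One) \<bullet> b\<bar>" if "b \<in> Basis" for b
    using that assms by (auto simp: mem_box inner_diff_left inner_add_left)
  then have "norm (z - x) \<le> norm (r *\<^sub>R (One :: 'a))"
    by (rule norm_le_componentwise)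
  with assms show "z \<in> cball x (r * norm (One :: 'a))"
    by (simp add: dist_norm norm_minus_commute)
qed

text \<open>Lebesgue's differentiation theorem: at almost every point, averages over small cubes
  converge to the value of the function.\<close>

lemma AE_eq_0_if_cube_integrals_eq_0:
  fixes h :: "'a::euclidean_space \<Rightarrow> real"
  assumes h: "integrable lebesgue h" and U: "open U"
    and cubes: "\<And>x r. cbox x (x + r *\<^sub>R One) \<subseteq> U \<Longrightarrow> integral (cbox x (x + r *\<^sub>R One)) h = 0"
  shows "AE x in lebesgue. x \<in> U \<longrightarrow> h x = 0"
proof -
  have "h integrable_on cbox a b" for a b
    using integrable_mult_indicator[OF _ h, of "cbox a b"]
    by (intro set_lebesgue_integral_eq_integral(1)) (auto simp: set_integrable_def)
  then obtain N where N: "negligible N"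
    and diff: "\<And>x e. \<lbrakk>x \<notin> N; 0 < e\<rbrakk> \<Longrightarrow> \<exists>d>0. \<forall>r. 0 < r \<and> r < d \<longrightarrow>
       norm (integral (cbox x (x + r *\<^sub>R One)) h /\<^sub>R r ^ DIM('a) - h x) < e"
    using integrable_ccontinuous_explicit by blast
  have main: "h x = 0" if x: "x \<in> U" "x \<notin> N" for x
  proof (rule ccontr)
    assume "h x \<noteq> 0"
    obtain e where "e > 0" and e: "cball x e \<subseteq> U"
      using U x(1) open_contains_cball by blast
    obtain d where "d > 0" and d: "\<And>r. 0 < r \<and> r < d \<Longrightarrow>
        norm (integral (cbox x (x + r *\<^sub>R One)) h /\<^sub>R r ^ DIM('a) - h x) < \<bar>h x\<bar>"
      using diff[OF x(2)] \<open>h x \<noteq> 0\<close> by (meson zero_less_abs_iff)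
    define r where "r = min (d / 2) (e / norm (One :: 'a))"
    have "0 < r" "r < d"
      using \<open>d > 0\<close> \<open>e > 0\<close> by (auto simp: r_def)
    moreover have "r * norm (One :: 'a) \<le> e"
      by (simp add: r_def min_def field_simps)
    then have "cbox x (x + r *\<^sub>R One) \<subseteq> U"
      using cube_subset_cball[of r x] \<open>0 < r\<close> e by fastforce
    then have "integral (cbox x (x + r *\<^sub>R One)) h = 0"
      by (rule cubes)
    ultimately show False
      using d[of r] by simp
  qed
  have "AE x in lebesgue. x \<notin> N"
    using N by (intro AE_not_in) (simp add: negligible_iff_null_sets)
  then show ?thesis
    by eventually_elim (use main in blast)
qed

lemma AE_box_eq_0_if_orthogonal_to_test_functions:
  fixes h :: "'a::euclidean_space \<Rightarrow> real"
  assumes h: "locally_integrable h"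
    and orth: "\<And>\<phi> K. test_function \<phi> \<Longrightarrow> compact K \<Longrightarrow> K \<subseteq> box a b \<Longrightarrow>
       (\<And>x. x \<notin> K \<Longrightarrow> \<phi> x = 0) \<Longrightarrow> (\<integral>x. h x * \<phi> x \<partial>lebesgue) = 0"
  shows "AE x in lebesgue. x \<in> box a b \<longrightarrow> h x = 0"
proof -
  define h0 where "h0 x = indicator (cbox a b) x * h x" for x
  have int_h0: "integrable lebesgue h0"
    using h unfolding locally_integrable_def set_integrable_def h0_def by simp
  have "AE x in lebesgue. x \<in> box a b \<longrightarrow> h0 x = 0"
  proof (rule AE_eq_0_if_cube_integrals_eq_0[OF int_h0 open_box])
    fix x r
    assume cube: "cbox x (x + r *\<^sub>R One) \<subseteq> box a b"
    have "(\<integral>y. h0 y * cube_bump n x r y \<partial>lebesgue) = (\<integral>y. h y * cube_bump n x r y \<partial>lebesgue)" for n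
      using cube box_subset_cbox[of a b] cube_bump_eq_0[of _ x r n]
      by (intro Bochner_Integration.integral_cong) (auto simp: h0_def indicator_def)
    also have "\<dots> n = 0" for n
      using cube cube_bump_eq_0 by (intro orth test_function_cube_bump compact_cbox) auto
    finally show "integral (cbox x (x + r *\<^sub>R One)) h0 = 0"
      by (intro integral_cube_eq_0_if_orthogonal_to_bumps int_h0)
  qed
  then show ?thesis
    by eventually_elim (auto simp: h0_def dest!: subsetD[OF box_subset_cbox])
qed

section \<open>Uniqueness of weak gradients\<close>

lemma weak_gradient_uminus: "weak_gradient u g \<Longrightarrow> weak_gradient (\<lambda>x. - u x) (\<lambda>x. - g x)"
  unfolding weak_gradient_def locally_integrable_def set_integrable_def
  by auto

lemma weak_gradient_wgrad: "weak_gradient u g \<Longrightarrow> weak_gradient u (wgrad u)"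
  unfolding wgrad_def by (rule someI[of "weak_gradient u" g])

lemma weak_gradient_cong_AE:
  assumes "weak_gradient v g" "AE x in lebesgue. v x = w x"
  shows "weak_gradient w g"
proof -
  have "integrable lebesgue (\<lambda>x. indicator K x * v x) \<longleftrightarrow> integrable lebesgue (\<lambda>x. indicator K x * w x)" for K
    using assms(2) by (intro lebesgue_integrable_cong_AE) auto
  moreover have "(\<integral>x. v x * frechet_derivative \<phi> (at x) b \<partial>lebesgue) = (\<integral>x. w x * frechet_derivative \<phi> (at x) b \<partial>lebesgue)"
    for \<phi> b
    using assms(2) by (intro lebesgue_integral_cong_AE) auto
  ultimately show ?thesis
    using assms(1) unfolding weak_gradient_def locally_integrable_def set_integrable_def by simp
qed

lemma weak_gradient_unique_on_box:
  fixes v w :: "'a::euclidean_space \<Rightarrow> real"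
  assumes v: "weak_gradient v g" and w: "weak_gradient w g'"
    and eq: "AE x in lebesgue. x \<in> box a b \<longrightarrow> v x = w x"
  shows "AE x in lebesgue. x \<in> box a b \<longrightarrow> g x = g' x"
proof -
  have "AE x in lebesgue. x \<in> box a b \<longrightarrow> g x \<bullet> e - g' x \<bullet> e = 0" if e: "e \<in> Basis" for e
  proof (rule AE_box_eq_0_if_orthogonal_to_test_functions)
    have "locally_integrable (\<lambda>x. g x \<bullet> e)" "locally_integrable (\<lambda>x. g' x \<bullet> e)"
      using v w e by (auto simp: weak_gradient_def)
    then show "locally_integrable (\<lambda>x. g x \<bullet> e - g' x \<bullet> e)"
      by (auto simp: locally_integrable_def)
  next
    fix \<phi> :: "'a \<Rightarrow> real" and K
    assume \<phi>: "test_function \<phi>" and K: "compact K" "K \<subseteq> box a b" and \<phi>0: "\<And>x. x \<notin> K \<Longrightarrow> \<phi> x = 0"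
    have d\<phi>0: "frechet_derivative \<phi> (at x) e = 0" if "x \<notin> K" for x
      using frechet_derivative_eq_0_outside[OF compact_imp_closed[OF K(1)] \<phi>0 that] by simp
    have "AE x in lebesgue. v x * frechet_derivative \<phi> (at x) e = w x * frechet_derivative \<phi> (at x) e"
      using eq by eventually_elim (use K(2) d\<phi>0 in auto)
    then have "(\<integral>x. v x * frechet_derivative \<phi> (at x) e \<partial>lebesgue) = (\<integral>x. w x * frechet_derivative \<phi> (at x) e \<partial>lebesgue)"
      by (rule lebesgue_integral_cong_AE)
    then have "(\<integral>x. (g x \<bullet> e) * \<phi> x \<partial>lebesgue) = (\<integral>x. (g' x \<bullet> e) * \<phi> x \<partial>lebesgue)"
      using v w \<phi> e unfolding weak_gradient_def by simp
    moreover have "integrable lebesgue (\<lambda>x. (g x \<bullet> e) * \<phi> x)" "integrable lebesgue (\<lambda>x. (g' x \<bullet> e) * \<phi> x)"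
      using v w e test_function_continuous[OF \<phi>] K(1) \<phi>0
      by (auto simp: weak_gradient_def intro!: integrable_locally_integrable_times)
    ultimately show "(\<integral>x. (g x \<bullet> e - g' x \<bullet> e) * \<phi> x \<partial>lebesgue) = 0"
      by (simp add: left_diff_distrib)
  qed
  then have "AE x in lebesgue. \<forall>e\<in>Basis. x \<in> box a b \<longrightarrow> g x \<bullet> e = g' x \<bullet> e"
    by (subst AE_finite_all) auto
  then show ?thesis
    by eventually_elim (auto intro: euclidean_eqI)
qed

lemma weak_gradient_unique:
  fixes v :: "'a::euclidean_space \<Rightarrow> real"
  assumes "weak_gradient v g" "weak_gradient v g'"
  shows "AE x in lebesgue. g x = g' x"
proof -
  have "AE x in lebesgue. \<forall>n::nat. x \<in> box (- real n *\<^sub>R One) (real n *\<^sub>R One) \<longrightarrow> g x = g' x"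
    unfolding AE_all_countable using assms by (intro allI weak_gradient_unique_on_box) auto
  then show ?thesis
  proof eventually_elim
    case (elim x)
    obtain n :: nat where "norm x < real n"
      using reals_Archimedean2 by blast
    then have "x \<in> box (- real n *\<^sub>R One) (real n *\<^sub>R One)"
      using Basis_le_norm[of _ x] by (fastforce simp: mem_box inner_add_left abs_less_iff)
    with elim show ?case
      by blast
  qed
qed

lemma wgrad_AE_eq:
  assumes "weak_gradient v g" "AE x in lebesgue. v x = w x"
  shows "AE x in lebesgue. wgrad w x = g x"
proof -
  have w: "weak_gradient w g"
    by (rule weak_gradient_cong_AE[OF assms])
  show ?thesis
    by (rule weak_gradient_unique[OF weak_gradient_wgrad[OF w] w])
qed

lemma wgrad_AE_eq_on_box:
  assumes "weak_gradient v g" "weak_gradient w g'" "AE x in lebesgue. x \<in> box a b \<longrightarrow> v x = w x"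
  shows "AE x in lebesgue. x \<in> box a b \<longrightarrow> wgrad v x = wgrad w x"
  by (rule weak_gradient_unique_on_box[OF weak_gradient_wgrad[OF assms(1)] weak_gradient_wgrad[OF assms(2)] assms(3)])

section \<open>Truncations that do not act\<close>

lemma trunc_eq_self: "\<bar>s\<bar> \<le> a \<Longrightarrow> trunc a s = s"
  by (auto simp: trunc_def)

lemma Hfun_eq_uminus: "\<bar>v x\<bar> + \<bar>\<phi> x\<bar> \<le> t \<Longrightarrow> t \<le> \<alpha> \<Longrightarrow> Hfun \<alpha> t v \<phi> x = - \<phi> x"
  by (simp add: Hfun_def trunc_eq_self)

lemma truncations_inactive:
  assumes bound: "AE x in lebesgue. x \<in> U \<longrightarrow> \<bar>u x\<bar> \<le> M"
    and \<phi>0: "\<And>x. x \<notin> U \<Longrightarrow> \<phi> x = 0" and S: "\<And>x. \<bar>\<phi> x\<bar> \<le> S"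
    and "M + S \<le> t" "t \<le> \<alpha>"
  shows "AE x in lebesgue. Hfun \<alpha> t u \<phi> x = - \<phi> x"
    and "AE x in lebesgue. x \<in> U \<longrightarrow> trunc \<alpha> (u x) = u x"
proof -
  have "Hfun \<alpha> t u \<phi> x = - \<phi> x" if "x \<in> U \<longrightarrow> \<bar>u x\<bar> \<le> M" for x
  proof (cases "x \<in> U")
    case True
    with that S[of x] assms(4,5) show ?thesis
      by (intro Hfun_eq_uminus) auto
  qed (simp add: \<phi>0 Hfun_def)
  with bound show "AE x in lebesgue. Hfun \<alpha> t u \<phi> x = - \<phi> x"
    by (auto elim: eventually_mono)
  show "AE x in lebesgue. x \<in> U \<longrightarrow> trunc \<alpha> (u x) = u x"
    using bound by eventually_elim (use S assms(4,5) in \<open>force intro: trunc_eq_self\<close>)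
qed

lemma localized_asymptotic_solution_test_function:
  assumes "localized_asymptotic_solution p V f u" and \<psi>: "test_function \<psi>" and "0 < p"
    and "0 < t" and S: "\<And>x. \<bar>\<psi> x\<bar> \<le> S" and "t + S < \<alpha>"
  shows "(\<integral>x. norm (wgrad (\<lambda>x. trunc \<alpha> (u x)) x) powr (p - 2) *
            (wgrad (\<lambda>x. trunc \<alpha> (u x)) x \<bullet> wgrad (Hfun \<alpha> t u \<psi>) x) \<partial>lebesgue)
       + (\<integral>x. V x * \<bar>trunc \<alpha> (u x)\<bar> powr (p - 2) * trunc \<alpha> (u x) * Hfun \<alpha> t u \<psi> x \<partial>lebesgue)
       = (\<integral>x. f x * Hfun \<alpha> t u \<psi> x \<partial>lebesgue)"
proof -
  have "\<psi> \<in> borel_measurable lebesgue"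
    by (rule continuous_borel_measurable_lebesgue[OF test_function_continuous[OF \<psi>]])
  then have "esssup lebesgue (\<lambda>x. ereal \<bar>\<psi> x\<bar>) \<le> ereal S"
    using S by (intro esssup_I) auto
  then have "Linf \<psi>" and "ereal t + esssup lebesgue (\<lambda>x. ereal \<bar>\<psi> x\<bar>) < ereal \<alpha>"
    using \<open>\<psi> \<in> borel_measurable lebesgue\<close> \<open>t + S < \<alpha>\<close>
    by (auto simp: Linf_def intro: le_less_trans order.strict_trans1 add_left_mono)
  moreover have "W1p p \<psi>" "compact_support \<psi>"
    using W1p_test_function[OF \<psi> \<open>0 < p\<close>] \<psi> by (auto simp: test_function_def)
  ultimately show ?thesis
    using assms(1) \<open>0 < t\<close> unfolding localized_asymptotic_solution_def Let_def by blast
qed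

lemma localized_asymptotic_solution_identity:
  assumes las: "localized_asymptotic_solution p V f u" and "1 < p" and u: "weak_gradient u g"
    and \<psi>: "test_function \<psi>" and K: "compact K" "K \<subseteq> box a b" and \<psi>0: "\<And>x. x \<notin> K \<Longrightarrow> \<psi> x = 0"
    and bound: "AE x in lebesgue. x \<in> box a b \<longrightarrow> \<bar>u x\<bar> \<le> M"
  shows "(\<integral>x. norm (wgrad u x) powr (p - 2) * (wgrad u x \<bullet> cgrad \<psi> x) \<partial>lebesgue)
         + (\<integral>x. V x * \<bar>u x\<bar> powr (p - 2) * u x * \<psi> x \<partial>lebesgue)
         = (\<integral>x. f x * \<psi> x \<partial>lebesgue)"
proof -
  obtain S where "S \<ge> 0" and S: "\<And>x. \<bar>\<psi> x\<bar> \<le> S"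
    using continuous_compact_support_bounded[OF test_function_continuous[OF \<psi>] K(1) \<psi>0] by blast
  define t where "t = max M 0 + S + 1"
  define \<alpha> where "\<alpha> = t + S + 1"
  let ?Tu = "\<lambda>x. trunc \<alpha> (u x)" and ?H = "Hfun \<alpha> t u \<psi>"
  have \<psi>0_box: "\<And>x. x \<notin> box a b \<Longrightarrow> \<psi> x = 0"
    using K(2) \<psi>0 by blast
  have cgrad0: "cgrad \<psi> x = 0" if "x \<notin> box a b" for x
    using cgrad_eq_0_outside[where \<phi>=\<psi>, OF compact_imp_closed[OF K(1)] \<psi>0] K(2) that by blast
  have "M + S \<le> t" "t \<le> \<alpha>" "0 < t"
    using \<open>S \<ge> 0\<close> by (simp_all add: t_def \<alpha>_def)
  then have H: "AE x in lebesgue. ?H x = - \<psi> x" and Tu: "AE x in lebesgue. x \<in> box a b \<longrightarrow> ?Tu x = u x"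
    using truncations_inactive[where \<phi>=\<psi>, OF bound \<psi>0_box S] by blast+
  have "Xsp p V ?Tu"
    using las \<open>0 < t\<close> \<open>t \<le> \<alpha>\<close> unfolding localized_asymptotic_solution_def by auto
  then obtain g' where "weak_gradient ?Tu g'"
    unfolding Xsp_def W1p_def by blast
  with u Tu have grad_Tu: "AE x in lebesgue. x \<in> box a b \<longrightarrow> wgrad ?Tu x = wgrad u x"
    by (intro wgrad_AE_eq_on_box)
  have grad_H: "AE x in lebesgue. wgrad ?H x = - cgrad \<psi> x"
    using H by (intro wgrad_AE_eq[OF weak_gradient_uminus[OF weak_gradient_cgrad[OF \<psi>]]]) auto
  have "(\<integral>x. norm (wgrad ?Tu x) powr (p - 2) * (wgrad ?Tu x \<bullet> wgrad ?H x) \<partial>lebesgue)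
      + (\<integral>x. V x * \<bar>?Tu x\<bar> powr (p - 2) * ?Tu x * ?H x \<partial>lebesgue) = (\<integral>x. f x * ?H x \<partial>lebesgue)"
    using las \<psi> \<open>1 < p\<close> \<open>0 < t\<close> S by (intro localized_asymptotic_solution_test_function) (auto simp: \<alpha>_def)
  also have "(\<integral>x. norm (wgrad ?Tu x) powr (p - 2) * (wgrad ?Tu x \<bullet> wgrad ?H x) \<partial>lebesgue)
      = (\<integral>x. - (norm (wgrad u x) powr (p - 2) * (wgrad u x \<bullet> cgrad \<psi> x)) \<partial>lebesgue)"
    using grad_Tu grad_H
    by (intro lebesgue_integral_cong_AE) (erule (1) eventually_elim2, auto simp: cgrad0)
  also have "(\<integral>x. V x * \<bar>?Tu x\<bar> powr (p - 2) * ?Tu x * ?H x \<partial>lebesgue)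
      = (\<integral>x. - (V x * \<bar>u x\<bar> powr (p - 2) * u x * \<psi> x) \<partial>lebesgue)"
    using Tu H by (intro lebesgue_integral_cong_AE) (erule (1) eventually_elim2, auto simp: \<psi>0_box)
  also have "(\<integral>x. f x * ?H x \<partial>lebesgue) = (\<integral>x. - (f x * \<psi> x) \<partial>lebesgue)"
    using H by (intro lebesgue_integral_cong_AE) auto
  finally show ?thesis
    by simp
qed

theorem proposition7p5:
  fixes p :: real and V f u \<psi> :: "'a::euclidean_space \<Rightarrow> real"
  assumes "1 < p"
    and "Linf_loc V" and "AE x in lebesgue. V x \<ge> 1"
    and "integrable lebesgue f"
    and "localized_asymptotic_solution p V f u"
    and "W1p_loc p u" and "Linf_loc u"
    and "test_function \<psi>"
  shows "(\<integral>x. norm (wgrad u x) powr (p - 2) * (wgrad u x \<bullet> cgrad \<psi> x) \<partial>lebesgue)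
         + (\<integral>x. V x * \<bar>u x\<bar> powr (p - 2) * u x * \<psi> x \<partial>lebesgue)
         = (\<integral>x. f x * \<psi> x \<partial>lebesgue)"
proof -
  obtain K where K: "compact K" and \<psi>0: "\<And>x. x \<notin> K \<Longrightarrow> \<psi> x = 0"
    using assms(8) unfolding test_function_def compact_support_def by blast
  obtain a :: 'a where Ka: "K \<subseteq> box (- a) a"
    using bounded_subset_box_symmetric[OF compact_imp_bounded[OF K]] by blast
  obtain M where "AE x in lebesgue. x \<in> cbox (- a) a \<longrightarrow> \<bar>u x\<bar> \<le> M"
    using assms(7) compact_cbox unfolding Linf_loc_def by blast
  then have "AE x in lebesgue. x \<in> box (- a) a \<longrightarrow> \<bar>u x\<bar> \<le> M"
    by eventually_elim (use box_subset_cbox in blast)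
  moreover obtain g where "weak_gradient u g"
    using assms(6) unfolding W1p_loc_def by blast
  ultimately show ?thesis
    using localized_asymptotic_solution_identity[OF assms(5,1) _ assms(8) K Ka \<psi>0] by blast
qed

end
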